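(* Let $n\ge1$, let $q_1,q_2$ be powers of a prime $p$, $q=q_1\otimes q_2$, and $R=A(n,q_1,q_2)$. Let $J$ be the set of elements of $R$ of the form $\begin{pmatrix} 0 & v\\ 0 & 0\end{pmatrix}$, $v\in M_{n\times1}(\mathbb{F}_q)$ (this is the Jacobson radical of $R$). Then $J\cap Z(R)=\{0\}$, where $Z(R)$ is the center of $R$, and $|\mathscr{S}(R)|=|J|$.
   Context: For powers $q_1=p^{d_1}$, $q_2=p^{d_2}$ of a prime $p$, $q_1\otimes q_2:=p^{\operatorname{lcm}(d_1,d_2)}$; $\mathbb{F}_{q_1},\mathbb{F}_{q_2}$ are regarded as subfields of $\mathbb{F}_q$. $A(n,q_1,q_2)$ is the subring of $M_{n+1}(\mathbb{F}_q)$ of all block matrices $\begin{pmatrix} A & v\\ 0 & b\end{pmatrix}$ with $A\in M_n(\mathbb{F}_{q_1})$, $v\in M_{n\times 1}(\mathbb{F}_q)$, $b\in\mathbb{F}_{q_2}$. $\mathscr{S}(R)$ denotes the set of all semisimple complements to $J$ in $R$, i.e. $\mathbb{F}_p$-subalgebras $T$ of $R$ with $R=T\oplus J$ (and $T\cong R/J$). *)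

theory Defs
  imports "Jordan_Normal_Form.Matrix" "HOL-Computational_Algebra.Primes"
begin

text \<open>The ambient finite field F_q is a finite field type 'a. For a prime power Q dividing
  appropriately, the subfield F_Q of F_q is the set of roots of X^Q - X.\<close>

definition subfield_of_order :: "nat \<Rightarrow> 'a::{field,finite} set" where
  "subfield_of_order Q = {x. x ^ Q = x}"

text \<open>A(n,q1,q2): block matrices (A v; 0 b) of size (n+1) x (n+1) over 'a, with
  A in M_n(F_q1), v in F_q^n, b in F_q2. Index n is the last row/column.\<close>

definition A_ring :: "nat \<Rightarrow> nat \<Rightarrow> nat \<Rightarrow> 'a::{field,finite} mat set" where
  "A_ring n q1 q2 = {M \<in> carrier_mat (n+1) (n+1).
      (\<forall>i<n. \<forall>j<n. M $$ (i,j) \<in> subfield_of_order q1) \<and>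
      (\<forall>j<n. M $$ (n,j) = 0) \<and>
      M $$ (n,n) \<in> subfield_of_order q2}"

text \<open>The set J of matrices (0 v; 0 0).\<close>

definition J_ideal :: "nat \<Rightarrow> 'a::{field,finite} mat set" where
  "J_ideal n = {M \<in> carrier_mat (n+1) (n+1).
      \<forall>i<n+1. \<forall>j<n+1. (j \<noteq> n \<or> i = n) \<longrightarrow> M $$ (i,j) = 0}"

definition ring_center :: "nat \<Rightarrow> 'a::ring mat set \<Rightarrow> 'a mat set" where
  "ring_center n R = {z \<in> R. \<forall>x\<in>R. z * x = x * z}"

text \<open>(Unital) F_p-subalgebra of R (a subring of R containing the identity; in
  characteristic p, closure under F_p-scalars is closure under addition).\<close>

definition is_subalgebra :: "nat \<Rightarrow> 'a::{field,finite} mat set \<Rightarrow> 'a mat set \<Rightarrow> bool" where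
  "is_subalgebra n R T \<longleftrightarrow> T \<subseteq> R \<and> 1\<^sub>m (n+1) \<in> T \<and> 0\<^sub>m (n+1) (n+1) \<in> T \<and>
     (\<forall>x\<in>T. \<forall>y\<in>T. x + y \<in> T \<and> x * y \<in> T \<and> - x \<in> T)"

definition semisimple_complements ::
    "nat \<Rightarrow> 'a::{field,finite} mat set \<Rightarrow> 'a mat set \<Rightarrow> 'a mat set set" where
  "semisimple_complements n R J = {T. is_subalgebra n R T \<and>
     (\<forall>r\<in>R. \<exists>!(t,j). t \<in> T \<and> j \<in> J \<and> r = t + j)}"

end

theory Submission
  imports Defs "HOL-Number_Theory.Residues"
begin

(* Let E be the matrix unit at the corner (n,n). For j in J the matrices e = E + j are
   supported on the last column with corner entry 1; every x supported on the last column
   satisfies x e = x, and e j' = 0 for j' in J. Consequently J meets the centralizer C_R(e)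
   only in 0, and r - (r e - e r) lies in C_R(e) because the commutator lies in J: each
   C_R(E + j) is a complement. Conversely, a complement T contains some e = E + j, and for
   t in T the commutator t e - e t lies in T and in J, hence vanishes; so T is contained in,
   and therefore equal to, C_R(e). Since (E + j)(E + j') = E + j, different j give different
   centralizers, and J \<inter> Z(R) lies in J \<inter> C_R(E) = 0. *)

lemma prime_CHAR_finite_field: "prime CHAR('a::{field,finite})"
  by (rule prime_CHAR_semidom) (rule finite_imp_CHAR_pos, simp)

lemma CHAR_eq_prime_of_card:
  assumes "prime p" and "card (UNIV :: 'a::{field,finite} set) = p ^ k"
  shows "CHAR('a) = p"
proof -
  have "CHAR('a) dvd p ^ k"
    using CHAR_dvd_CARD[where 'a='a] assms(2) by simp
  then have "CHAR('a) dvd p"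
    using prime_dvd_power[OF prime_CHAR_finite_field[where 'a='a]] by blast
  then show ?thesis
    using primes_dvd_imp_eq[OF prime_CHAR_finite_field[where 'a='a] assms(1)] by simp
qed

section \<open>The subfields of a finite field\<close>

lemma subfield_of_order_zero: "(0::'a::{field,finite}) \<in> subfield_of_order (CHAR('a) ^ d)"
  using prime_gt_0_nat[OF prime_CHAR_finite_field[where 'a='a]]
  by (simp add: subfield_of_order_def)

lemma subfield_of_order_one: "(1::'a::{field,finite}) \<in> subfield_of_order (CHAR('a) ^ d)"
  by (simp add: subfield_of_order_def)

lemma subfield_of_order_add:
  fixes x y :: "'a::{field,finite}"
  assumes "x \<in> subfield_of_order (CHAR('a) ^ d)" and "y \<in> subfield_of_order (CHAR('a) ^ d)"
  shows "x + y \<in> subfield_of_order (CHAR('a) ^ d)"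
  using assms
  by (simp add: subfield_of_order_def freshmans_dream'[OF prime_CHAR_finite_field refl])

lemma subfield_of_order_mult:
  fixes x y :: "'a::{field,finite}"
  assumes "x \<in> subfield_of_order (CHAR('a) ^ d)" and "y \<in> subfield_of_order (CHAR('a) ^ d)"
  shows "x * y \<in> subfield_of_order (CHAR('a) ^ d)"
  using assms by (simp add: subfield_of_order_def power_mult_distrib)

lemma subfield_of_order_uminus:
  assumes "(x::'a::{field,finite}) \<in> subfield_of_order (CHAR('a) ^ d)"
  shows "- x \<in> subfield_of_order (CHAR('a) ^ d)"
proof -
  have "(- x) ^ CHAR('a) ^ d + x ^ CHAR('a) ^ d = (- x + x) ^ CHAR('a) ^ d"
    by (rule freshmans_dream'[OF prime_CHAR_finite_field refl, symmetric])
  also have "\<dots> = 0"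
    using prime_gt_0_nat[OF prime_CHAR_finite_field[where 'a='a]] by simp
  finally show ?thesis
    using assms by (simp add: subfield_of_order_def add_eq_0_iff2)
qed

lemma subfield_of_order_sum:
  fixes f :: "'b \<Rightarrow> 'a::{field,finite}"
  assumes "\<And>i. i \<in> A \<Longrightarrow> f i \<in> subfield_of_order (CHAR('a) ^ d)"
  shows "(\<Sum>i\<in>A. f i) \<in> subfield_of_order (CHAR('a) ^ d)"
  using assms
  by (simp add: subfield_of_order_def freshmans_dream_sum'[OF prime_CHAR_finite_field refl])

section \<open>Matrices supported on the last column\<close>

definition col_supported :: "nat \<Rightarrow> 'a::zero mat \<Rightarrow> bool" where
  "col_supported n M \<longleftrightarrow> M \<in> carrier_mat (n+1) (n+1) \<and> (\<forall>i<n+1. \<forall>k<n. M $$ (i,k) = 0)"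

definition corner_unit :: "nat \<Rightarrow> 'a::{zero,one} mat" where
  "corner_unit n = mat (n+1) (n+1) (\<lambda>(i,k). if i = n \<and> k = n then 1 else 0)"

definition centralizer :: "'a::semiring_1 mat set \<Rightarrow> 'a mat \<Rightarrow> 'a mat set" where
  "centralizer R e = {t \<in> R. t * e = e * t}"

lemma J_ideal_iff: "M \<in> J_ideal n \<longleftrightarrow> col_supported n M \<and> M $$ (n,n) = 0"
  unfolding J_ideal_def col_supported_def by (auto simp: less_Suc_eq)

lemma col_supported_corner_unit: "col_supported n (corner_unit n :: 'a::{zero,one} mat)"
  unfolding col_supported_def corner_unit_def by auto

lemma corner_unit_diag: "(corner_unit n :: 'a::{zero,one} mat) $$ (n,n) = 1"
  unfolding corner_unit_def by simp

lemma col_supported_corner_unit_plus: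
  assumes "j \<in> J_ideal n"
  shows "col_supported n (corner_unit n + j)" and "(corner_unit n + j) $$ (n,n) = 1"
  using assms unfolding J_ideal_iff col_supported_def corner_unit_def by auto

lemma index_mult_mat_split_last:
  assumes "x \<in> carrier_mat (n+1) (n+1)" "y \<in> carrier_mat (n+1) (n+1)" "i < n+1" "k < n+1"
  shows "(x * y) $$ (i,k) = (\<Sum>l<n. x $$ (i,l) * y $$ (l,k)) + x $$ (i,n) * y $$ (n,k)"
  using assms by (simp add: scalar_prod_def lessThan_atLeast0 row_def col_def)

lemma index_mult_col_supported_left:
  assumes "col_supported n x" "y \<in> carrier_mat (n+1) (n+1)" "i < n+1" "k < n+1"
  shows "(x * y) $$ (i,k) = x $$ (i,n) * y $$ (n,k)"
  using assms index_mult_mat_split_last[of x n y i k] by (simp add: col_supported_def)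

lemma index_mult_col_supported_right:
  assumes "x \<in> carrier_mat (n+1) (n+1)" "col_supported n y" "i < n+1" "k < n"
  shows "(x * y) $$ (i,k) = 0"
  using assms index_mult_mat_split_last[of x n y i k] by (simp add: col_supported_def)

lemma index_mult_last_row:
  assumes "x \<in> carrier_mat (n+1) (n+1)" "y \<in> carrier_mat (n+1) (n+1)" "k < n+1"
    and "\<And>l. l < n \<Longrightarrow> x $$ (n,l) = 0"
  shows "(x * y) $$ (n,k) = x $$ (n,n) * y $$ (n,k)"
  using assms index_mult_mat_split_last[of x n y n k] by simp

lemma mult_corner_idempotent:
  fixes x e :: "'a::semiring_1 mat"
  assumes "col_supported n x" "col_supported n e" "e $$ (n,n) = 1"
  shows "x * e = x"
proof (rule eq_matI)
  fix i k assume "i < dim_row x" "k < dim_col x"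
  then have ik: "i < n+1" "k < n+1"
    using assms(1) by (auto simp: col_supported_def)
  then have "(x * e) $$ (i,k) = x $$ (i,n) * e $$ (n,k)"
    using assms(1,2) by (intro index_mult_col_supported_left) (auto simp: col_supported_def)
  then show "(x * e) $$ (i,k) = x $$ (i,k)"
    using assms ik by (cases "k = n") (auto simp: col_supported_def)
qed (use assms in \<open>auto simp: col_supported_def\<close>)

lemma corner_idempotent_mult_J_ideal:
  fixes e :: "'a::{field,finite} mat"
  assumes "col_supported n e" "j \<in> J_ideal n"
  shows "e * j = 0\<^sub>m (n+1) (n+1)"
proof (rule eq_matI)
  fix i k assume "i < dim_row (0\<^sub>m (n+1) (n+1) :: 'a mat)" "k < dim_col (0\<^sub>m (n+1) (n+1) :: 'a mat)"
  then have ik: "i < n+1" "k < n+1"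
    by auto
  then have "(e * j) $$ (i,k) = e $$ (i,n) * j $$ (n,k)"
    using assms by (intro index_mult_col_supported_left) (auto simp: J_ideal_def)
  then show "(e * j) $$ (i,k) = 0\<^sub>m (n+1) (n+1) $$ (i,k)"
    using assms ik by (cases "k = n") (auto simp: J_ideal_iff col_supported_def)
qed (use assms in \<open>auto simp: col_supported_def J_ideal_def\<close>)

lemma J_ideal_diff: "x \<in> J_ideal n \<Longrightarrow> y \<in> J_ideal n \<Longrightarrow> x - y \<in> J_ideal n"
  unfolding J_ideal_def by auto

lemma mat_diff_eq_zero_iff:
  fixes x y :: "'a::ab_group_add mat"
  assumes "x \<in> carrier_mat a b" "y \<in> carrier_mat a b"
  shows "x - y = 0\<^sub>m a b \<longleftrightarrow> x = y"
proof
  assume diff: "x - y = 0\<^sub>m a b"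
  show "x = y"
  proof (rule eq_matI)
    fix i j assume "i < dim_row y" "j < dim_col y"
    then have "(x - y) $$ (i,j) = 0"
      using assms by (simp add: diff)
    then show "x $$ (i,j) = y $$ (i,j)"
      using assms \<open>i < dim_row y\<close> \<open>j < dim_col y\<close> by simp
  qed (use assms in auto)
qed (use assms in \<open>simp add: minus_r_inv_mat\<close>)

lemma is_subalgebraD:
  assumes "is_subalgebra n R T"
  shows "T \<subseteq> R" and "1\<^sub>m (n+1) \<in> T" and "0\<^sub>m (n+1) (n+1) \<in> T"
    and "x \<in> T \<Longrightarrow> y \<in> T \<Longrightarrow> x + y \<in> T"
    and "x \<in> T \<Longrightarrow> y \<in> T \<Longrightarrow> x * y \<in> T"
    and "x \<in> T \<Longrightarrow> - x \<in> T"
  using assms unfolding is_subalgebra_def by blast+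

lemma is_subalgebra_diff_mem:
  assumes "R \<subseteq> carrier_mat (n+1) (n+1)" "is_subalgebra n R T" "x \<in> T" "y \<in> T"
  shows "x - y \<in> T"
proof -
  have "x \<in> carrier_mat (n+1) (n+1)" "y \<in> carrier_mat (n+1) (n+1)"
    using is_subalgebraD(1)[OF assms(2)] assms(1,3,4) by blast+
  then have "x - y = x + - y"
    by (rule minus_add_uminus_mat)
  then show ?thesis
    using is_subalgebraD(4,6)[OF assms(2)] assms(3,4) by metis
qed

lemma semisimple_complements_decompose:
  assumes "T \<in> semisimple_complements n R J" "r \<in> R"
  obtains t j where "t \<in> T" "j \<in> J" "r = t + j"
proof -
  have "\<exists>!p. case p of (t,j) \<Rightarrow> t \<in> T \<and> j \<in> J \<and> r = t + j"
    using assms unfolding semisimple_complements_def by blast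
  then obtain p where "case p of (t,j) \<Rightarrow> t \<in> T \<and> j \<in> J \<and> r = t + j"
    by (rule ex1E)
  then show ?thesis
    using that by (cases p) auto
qed

lemma semisimple_complements_unique:
  assumes "T \<in> semisimple_complements n R J" "r \<in> R"
    and "t \<in> T" "j \<in> J" "r = t + j" and "t' \<in> T" "j' \<in> J" "r = t' + j'"
  shows "t = t'" and "j = j'"
proof -
  have "\<exists>!p. case p of (t,j) \<Rightarrow> t \<in> T \<and> j \<in> J \<and> r = t + j"
    using assms(1,2) unfolding semisimple_complements_def by blast
  moreover have "case (t, j) of (t,j) \<Rightarrow> t \<in> T \<and> j \<in> J \<and> r = t + j"
    and "case (t', j') of (t,j) \<Rightarrow> t \<in> T \<and> j \<in> J \<and> r = t + j"
    using assms(3-8) by simp_all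
  ultimately have "(t, j) = (t', j')"
    by (metis (no_types, lifting) ex1E)
  then show "t = t'" and "j = j'"
    by simp_all
qed

lemma semisimple_complementsD:
  assumes R: "R \<subseteq> carrier_mat (n+1) (n+1)" and T: "T \<in> semisimple_complements n R (J_ideal n)"
  shows "is_subalgebra n R T" and "\<And>r. r \<in> R \<Longrightarrow> \<exists>t\<in>T. r - t \<in> J_ideal n"
    and "J_ideal n \<inter> T = {0\<^sub>m (n+1) (n+1)}"
proof -
  show sub: "is_subalgebra n R T"
    using T unfolding semisimple_complements_def by simp
  have T_carrier: "T \<subseteq> carrier_mat (n+1) (n+1)"
    using is_subalgebraD(1)[OF sub] R by blast
  show "\<exists>t\<in>T. r - t \<in> J_ideal n" if "r \<in> R" for r
  proof -
    obtain t j where tj: "t \<in> T" "j \<in> J_ideal n" "r = t + j"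
      using semisimple_complements_decompose[OF T \<open>r \<in> R\<close>] .
    then have "r - t = j"
      using T_carrier by (intro eq_matI) (auto simp: J_ideal_def)
    then show "\<exists>t\<in>T. r - t \<in> J_ideal n"
      using tj by blast
  qed
  show "J_ideal n \<inter> T = {0\<^sub>m (n+1) (n+1)}"
  proof (intro equalityI subsetI)
    fix x assume x: "x \<in> J_ideal n \<inter> T"
    then have x_carrier: "x \<in> carrier_mat (n+1) (n+1)" and "x \<in> R"
      using is_subalgebraD(1)[OF sub] T_carrier by auto
    have "x = 0\<^sub>m (n+1) (n+1)"
    proof (rule semisimple_complements_unique(1)[OF T \<open>x \<in> R\<close>])
      show "x \<in> T" "0\<^sub>m (n+1) (n+1) \<in> J_ideal n" "x = x + 0\<^sub>m (n+1) (n+1)"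
        using x x_carrier by (auto simp: J_ideal_def)
      show "0\<^sub>m (n+1) (n+1) \<in> T" "x \<in> J_ideal n" "x = 0\<^sub>m (n+1) (n+1) + x"
        using x x_carrier is_subalgebraD(3)[OF sub] by auto
    qed
    then show "x \<in> {0\<^sub>m (n+1) (n+1)}" by simp
  qed (use is_subalgebraD(3)[OF sub] in \<open>auto simp: J_ideal_def\<close>)
qed

lemma semisimple_complementsI:
  assumes R: "R \<subseteq> carrier_mat (n+1) (n+1)" and sub: "is_subalgebra n R T"
    and ex: "\<And>r. r \<in> R \<Longrightarrow> \<exists>t\<in>T. r - t \<in> J_ideal n"
    and trivial: "J_ideal n \<inter> T = {0\<^sub>m (n+1) (n+1)}"
  shows "T \<in> semisimple_complements n R (J_ideal n)"
proof -
  have T_carrier: "T \<subseteq> carrier_mat (n+1) (n+1)"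
    using is_subalgebraD(1)[OF sub] R by blast
  have "\<exists>!(t,j). t \<in> T \<and> j \<in> J_ideal n \<and> r = t + j" if r: "r \<in> R" for r
  proof -
    obtain t where t: "t \<in> T" "r - t \<in> J_ideal n"
      using ex r by blast
    have r_carrier: "r \<in> carrier_mat (n+1) (n+1)" and t_carrier: "t \<in> carrier_mat (n+1) (n+1)"
      using r t(1) R T_carrier by blast+
    have "r = t + (r - t)"
      using r_carrier t_carrier by (intro eq_matI) auto
    then have "case (t, r - t) of (t,j) \<Rightarrow> t \<in> T \<and> j \<in> J_ideal n \<and> r = t + j"
      using t by simp
    moreover have "p = (t, r - t)"
      if p_decomposes: "case p of (t,j) \<Rightarrow> t \<in> T \<and> j \<in> J_ideal n \<and> r = t + j" for p
    proof -
      obtain a b where p: "p = (a, b)" and a: "a \<in> T" and b: "b \<in> J_ideal n" and rab: "r = a + b"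
        using p_decomposes by (cases p) simp
      have a_carrier: "a \<in> carrier_mat (n+1) (n+1)"
        using a T_carrier by blast
      have "a - t \<in> T"
        using is_subalgebra_diff_mem[OF R sub a t(1)] .
      moreover have "r - a = b"
        using rab a_carrier b by (intro eq_matI) (auto simp: J_ideal_def)
      moreover have "a - t = (r - t) - (r - a)"
        using r_carrier t_carrier a_carrier by (intro eq_matI) auto
      ultimately have "a - t \<in> J_ideal n \<inter> T"
        using J_ideal_diff[OF t(2) b] by simp
      then have "a - t = 0\<^sub>m (n+1) (n+1)"
        unfolding trivial by simp
      then have "a = t"
        using a_carrier t_carrier by (simp add: mat_diff_eq_zero_iff)
      with \<open>r - a = b\<close> show ?thesis
        using p by simp
    qed
    ultimately show ?thesis
      by (rule ex1I)
  qed
  then show ?thesis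
    unfolding semisimple_complements_def using sub by (intro CollectI conjI ballI)
qed

section \<open>Complements in block triangular algebras\<close>

locale block_triangular_algebra =
  fixes n :: nat and R :: "'a::{field,finite} mat set"
  assumes carrier: "R \<subseteq> carrier_mat (n+1) (n+1)"
    and subalgebra: "is_subalgebra n R R"
    and J_ideal_subset: "J_ideal n \<subseteq> R"
    and corner_unit_mem: "corner_unit n \<in> R"
    and last_row_zero: "M \<in> R \<Longrightarrow> k < n \<Longrightarrow> M $$ (n,k) = 0"
begin

lemma mem_carrier: "M \<in> R \<Longrightarrow> M \<in> carrier_mat (n+1) (n+1)"
  using carrier by blast

lemma commutator_mem_J_ideal:
  assumes r: "r \<in> R" and e: "col_supported n e" "e $$ (n,n) = 1"
  shows "r * e - e * r \<in> J_ideal n"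
proof -
  have r_carrier: "r \<in> carrier_mat (n+1) (n+1)" and e_carrier: "e \<in> carrier_mat (n+1) (n+1)"
    using mem_carrier[OF r] e(1) by (auto simp: col_supported_def)
  have "(r * e) $$ (i,k) = 0" if "i < n+1" "k < n" for i k
    using index_mult_col_supported_right[OF r_carrier e(1) that] .
  moreover have "(e * r) $$ (i,k) = 0" if "i < n+1" "k < n" for i k
    using index_mult_col_supported_left[OF e(1) r_carrier, of i k] that last_row_zero[OF r]
    by simp
  moreover have "(r * e) $$ (n,n) = (e * r) $$ (n,n)"
    using index_mult_last_row[OF r_carrier e_carrier, of n] last_row_zero[OF r]
      index_mult_col_supported_left[OF e(1) r_carrier, of n n] e(2)
    by simp
  ultimately show ?thesis
    using r_carrier e_carrier unfolding J_ideal_iff col_supported_def by auto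
qed

lemma J_ideal_inter_centralizer:
  assumes e: "e \<in> R" "col_supported n e" "e $$ (n,n) = 1"
  shows "J_ideal n \<inter> centralizer R e = {0\<^sub>m (n+1) (n+1)}"
proof
  show "J_ideal n \<inter> centralizer R e \<subseteq> {0\<^sub>m (n+1) (n+1)}"
  proof
    fix j assume j: "j \<in> J_ideal n \<inter> centralizer R e"
    then have j_col: "col_supported n j" and "j * e = e * j"
      by (auto simp: J_ideal_iff centralizer_def)
    then have "j = e * j"
      using mult_corner_idempotent[OF j_col e(2,3)] by simp
    also have "\<dots> = 0\<^sub>m (n+1) (n+1)"
      using corner_idempotent_mult_J_ideal[OF e(2)] j by blast
    finally show "j \<in> {0\<^sub>m (n+1) (n+1)}"
      by simp
  qed
  have "0\<^sub>m (n+1) (n+1) \<in> centralizer R e"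
    using is_subalgebraD(3)[OF subalgebra] mem_carrier[OF e(1)]
    by (simp add: centralizer_def left_mult_zero_mat right_mult_zero_mat)
  then show "{0\<^sub>m (n+1) (n+1)} \<subseteq> J_ideal n \<inter> centralizer R e"
    by (auto simp: J_ideal_def)
qed

lemma centralizer_subalgebra:
  assumes e: "e \<in> R"
  shows "is_subalgebra n R (centralizer R e)"
  unfolding is_subalgebra_def
proof (intro conjI ballI)
  have e_carrier: "e \<in> carrier_mat (n+1) (n+1)"
    using mem_carrier[OF e] .
  show "centralizer R e \<subseteq> R"
    by (auto simp: centralizer_def)
  show "1\<^sub>m (n+1) \<in> centralizer R e" "0\<^sub>m (n+1) (n+1) \<in> centralizer R e"
    using is_subalgebraD(2,3)[OF subalgebra] e_carrier
    by (simp_all add: centralizer_def left_mult_zero_mat right_mult_zero_mat)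
  fix x y assume x: "x \<in> centralizer R e" and y: "y \<in> centralizer R e"
  have xR: "x \<in> R" and yR: "y \<in> R" and xe: "x * e = e * x" and ye: "y * e = e * y"
    using x y by (auto simp: centralizer_def)
  note xy_carrier = mem_carrier[OF xR] mem_carrier[OF yR]
  have "(x + y) * e = e * (x + y)"
    using xy_carrier e_carrier xe ye by (simp add: add_mult_distrib_mat mult_add_distrib_mat)
  then show "x + y \<in> centralizer R e"
    using is_subalgebraD(4)[OF subalgebra xR yR] by (simp add: centralizer_def)
  have "x * y * e = x * (e * y)"
    using xy_carrier e_carrier ye by simp
  also have "\<dots> = (e * x) * y"
    using xy_carrier e_carrier xe by (simp flip: assoc_mult_mat)
  also have "\<dots> = e * (x * y)"
    using xy_carrier e_carrier by simp
  finally show "x * y \<in> centralizer R e"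
    using is_subalgebraD(5)[OF subalgebra xR yR] by (simp add: centralizer_def)
  have "- x * e = e * - x"
    using xy_carrier e_carrier xe by simp
  then show "- x \<in> centralizer R e"
    using is_subalgebraD(6)[OF subalgebra xR] by (simp add: centralizer_def)
qed

lemma centralizer_mem_semisimple_complements:
  assumes j: "j \<in> J_ideal n"
  shows "centralizer R (corner_unit n + j) \<in> semisimple_complements n R (J_ideal n)"
proof -
  define e where "e = corner_unit n + j"
  have eR: "e \<in> R"
    unfolding e_def using is_subalgebraD(4)[OF subalgebra corner_unit_mem] j J_ideal_subset by blast
  note e_col = col_supported_corner_unit_plus[OF j, folded e_def]
  have e_carrier: "e \<in> carrier_mat (n+1) (n+1)"
    using mem_carrier[OF eR] .
  have "\<exists>t\<in>centralizer R e. r - t \<in> J_ideal n" if r: "r \<in> R" for r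
  proof
    define c where "c = r * e - e * r"
    have c: "c \<in> J_ideal n"
      unfolding c_def using commutator_mem_J_ideal[OF r e_col] .
    have r_carrier: "r \<in> carrier_mat (n+1) (n+1)" and c_carrier: "c \<in> carrier_mat (n+1) (n+1)"
      using mem_carrier[OF r] c by (auto simp: J_ideal_def)
    have "(r - c) * e = r * e - c"
      using r_carrier c_carrier e_carrier mult_corner_idempotent[of n c e] c e_col
      by (simp add: minus_mult_distrib_mat J_ideal_iff)
    also have "\<dots> = e * r"
      unfolding c_def using r_carrier e_carrier by (intro eq_matI) auto
    also have "\<dots> = e * (r - c)"
      using r_carrier c_carrier e_carrier corner_idempotent_mult_J_ideal[OF e_col(1) c]
      by (simp add: mult_minus_distrib_mat, intro eq_matI) auto
    finally show "r - c \<in> centralizer R e"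
      using is_subalgebra_diff_mem[OF carrier subalgebra r] c J_ideal_subset
      by (auto simp: centralizer_def)
    show "r - (r - c) \<in> J_ideal n"
      using r_carrier c_carrier c by (auto simp: J_ideal_def)
  qed
  then show ?thesis
    unfolding e_def[symmetric]
    by (intro semisimple_complementsI carrier centralizer_subalgebra eR
        J_ideal_inter_centralizer e_col)
qed

lemma semisimple_complement_eq_centralizer:
  assumes T: "T \<in> semisimple_complements n R (J_ideal n)"
  obtains j where "j \<in> J_ideal n" and "T = centralizer R (corner_unit n + j)"
proof -
  note sub = semisimple_complementsD(1)[OF carrier T]
    and trivial = semisimple_complementsD(3)[OF carrier T]
  obtain e where e: "e \<in> T" "corner_unit n - e \<in> J_ideal n"
    using semisimple_complementsD(2)[OF carrier T corner_unit_mem] by blast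
  have eR: "e \<in> R"
    using e(1) is_subalgebraD(1)[OF sub] by blast
  define j where "j = e - corner_unit n"
  have corner_carrier: "corner_unit n \<in> carrier_mat (n+1) (n+1)"
    by (simp add: corner_unit_def)
  have "j = 0\<^sub>m (n+1) (n+1) - (corner_unit n - e)"
    unfolding j_def using mem_carrier[OF eR] corner_carrier by (intro eq_matI) auto
  then have j: "j \<in> J_ideal n"
    using J_ideal_diff[OF _ e(2)] by (simp add: J_ideal_def)
  have e_eq: "corner_unit n + j = e"
    unfolding j_def using mem_carrier[OF eR] corner_carrier by (intro eq_matI) auto
  note e_col = col_supported_corner_unit_plus[OF j, unfolded e_eq]
  have T_centralizer: "T \<subseteq> centralizer R e"
  proof
    fix t assume t: "t \<in> T"
    then have tR: "t \<in> R"
      using is_subalgebraD(1)[OF sub] by blast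
    have "t * e - e * t \<in> T"
      using is_subalgebra_diff_mem[OF carrier sub] is_subalgebraD(5)[OF sub] t e(1) by blast
    moreover have "t * e - e * t \<in> J_ideal n"
      using commutator_mem_J_ideal[OF tR e_col] .
    ultimately have "t * e - e * t = 0\<^sub>m (n+1) (n+1)"
      using trivial by blast
    then show "t \<in> centralizer R e"
      using tR mem_carrier[OF tR] mem_carrier[OF eR]
      by (simp add: centralizer_def mat_diff_eq_zero_iff)
  qed
  have "centralizer R e \<subseteq> T"
  proof
    fix x assume x: "x \<in> centralizer R e"
    then have xR: "x \<in> R"
      by (simp add: centralizer_def)
    obtain t where t: "t \<in> T" "x - t \<in> J_ideal n"
      using semisimple_complementsD(2)[OF carrier T xR] by blast
    have "x - t \<in> centralizer R e"
      using is_subalgebra_diff_mem[OF carrier centralizer_subalgebra[OF eR] x] T_centralizer t(1) by blast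
    then have "x - t = 0\<^sub>m (n+1) (n+1)"
      using J_ideal_inter_centralizer[OF eR e_col] t(2) by blast
    then have "x = t"
      using mem_carrier[OF xR] mem_carrier t(1) is_subalgebraD(1)[OF sub]
      by (simp add: mat_diff_eq_zero_iff subset_iff)
    then show "x \<in> T"
      using t(1) by simp
  qed
  then show ?thesis
    using that j T_centralizer e_eq by blast
qed

lemma inj_on_centralizer_corner_unit_plus:
  "inj_on (\<lambda>j. centralizer R (corner_unit n + j)) (J_ideal n)"
proof (rule inj_onI)
  fix j j' assume j: "j \<in> J_ideal n" and j': "j' \<in> J_ideal n"
    and eq: "centralizer R (corner_unit n + j) = centralizer R (corner_unit n + j')"
  have mem: "corner_unit n + i \<in> R" if "i \<in> J_ideal n" for i
    using is_subalgebraD(4)[OF subalgebra corner_unit_mem] that J_ideal_subset by blast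
  have "corner_unit n + j \<in> centralizer R (corner_unit n + j')"
    using mem[OF j] unfolding eq[symmetric] by (simp add: centralizer_def)
  then have "(corner_unit n + j) * (corner_unit n + j') = (corner_unit n + j') * (corner_unit n + j)"
    by (simp add: centralizer_def)
  then have "corner_unit n + j = corner_unit n + j'"
    using col_supported_corner_unit_plus[OF j] col_supported_corner_unit_plus[OF j']
    by (simp add: mult_corner_idempotent)
  moreover have "corner_unit n + i - corner_unit n = i" if "i \<in> J_ideal n" for i
    using that by (intro eq_matI) (auto simp: J_ideal_def corner_unit_def)
  ultimately show "j = j'"
    using j j' by metis
qed

lemma semisimple_complements_eq_image:
  "semisimple_complements n R (J_ideal n) = (\<lambda>j. centralizer R (corner_unit n + j)) ` J_ideal n"
proof (intro equalityI subsetI)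
  fix T assume "T \<in> semisimple_complements n R (J_ideal n)"
  then obtain j where "j \<in> J_ideal n" "T = centralizer R (corner_unit n + j)"
    by (rule semisimple_complement_eq_centralizer)
  then show "T \<in> (\<lambda>j. centralizer R (corner_unit n + j)) ` J_ideal n"
    by blast
next
  fix T assume "T \<in> (\<lambda>j. centralizer R (corner_unit n + j)) ` J_ideal n"
  then show "T \<in> semisimple_complements n R (J_ideal n)"
    using centralizer_mem_semisimple_complements by blast
qed

theorem card_semisimple_complements:
  "card (semisimple_complements n R (J_ideal n)) = card (J_ideal n :: 'a mat set)"
  unfolding semisimple_complements_eq_image
  using inj_on_centralizer_corner_unit_plus by (rule card_image)

theorem J_ideal_inter_ring_center:
  "J_ideal n \<inter> ring_center n R = {0\<^sub>m (n+1) (n+1)}"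
proof
  have "ring_center n R \<subseteq> centralizer R (corner_unit n)"
    using corner_unit_mem by (auto simp: ring_center_def centralizer_def)
  then have "J_ideal n \<inter> ring_center n R \<subseteq> J_ideal n \<inter> centralizer R (corner_unit n)"
    by (rule Int_mono[OF order_refl])
  also have "\<dots> = {0\<^sub>m (n+1) (n+1)}"
    by (rule J_ideal_inter_centralizer[OF corner_unit_mem col_supported_corner_unit corner_unit_diag])
  finally show "J_ideal n \<inter> ring_center n R \<subseteq> {0\<^sub>m (n+1) (n+1)}" .
next
  have "0\<^sub>m (n+1) (n+1) * x = x * 0\<^sub>m (n+1) (n+1)" if "x \<in> R" for x
    using mem_carrier[OF that] by (simp add: left_mult_zero_mat right_mult_zero_mat)
  then have "0\<^sub>m (n+1) (n+1) \<in> ring_center n R"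
    using is_subalgebraD(3)[OF subalgebra] by (simp add: ring_center_def)
  then show "{0\<^sub>m (n+1) (n+1)} \<subseteq> J_ideal n \<inter> ring_center n R"
    by (auto simp: J_ideal_def)
qed

end

section \<open>The algebra A(n, q1, q2)\<close>

lemma A_ring_mult_closed:
  fixes n d1 d2 :: nat and x y :: "'a::{field,finite} mat"
  defines "R \<equiv> A_ring n (CHAR('a) ^ d1) (CHAR('a) ^ d2)"
  assumes x: "x \<in> R" and y: "y \<in> R"
  shows "x * y \<in> R"
proof -
  have x_carrier: "x \<in> carrier_mat (n+1) (n+1)" and y_carrier: "y \<in> carrier_mat (n+1) (n+1)"
    using x y by (auto simp: R_def A_ring_def)
  have "(x * y) $$ (i,k) \<in> subfield_of_order (CHAR('a) ^ d1)" if "i < n" "k < n" for i k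
  proof -
    have "(x * y) $$ (i,k) = (\<Sum>l<n. x $$ (i,l) * y $$ (l,k))"
      using index_mult_mat_split_last[OF x_carrier y_carrier, of i k] that y
      by (simp add: R_def A_ring_def)
    also have "\<dots> \<in> subfield_of_order (CHAR('a) ^ d1)"
      using that x y
      by (intro subfield_of_order_sum subfield_of_order_mult) (auto simp: R_def A_ring_def)
    finally show ?thesis .
  qed
  moreover have "(x * y) $$ (n,k) = x $$ (n,n) * y $$ (n,k)" if "k < n+1" for k
    using index_mult_last_row[OF x_carrier y_carrier that] x by (simp add: R_def A_ring_def)
  ultimately show ?thesis
    using x y x_carrier y_carrier
    by (auto simp: R_def A_ring_def intro: subfield_of_order_mult)
qed

lemma block_triangular_algebra_A_ring:
  "block_triangular_algebra n (A_ring n (CHAR('a) ^ d1) (CHAR('a) ^ d2) :: 'a::{field,finite} mat set)"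
proof
  let ?R = "A_ring n (CHAR('a) ^ d1) (CHAR('a) ^ d2) :: 'a mat set"
  show "?R \<subseteq> carrier_mat (n+1) (n+1)"
    by (auto simp: A_ring_def)
  show "M \<in> ?R \<Longrightarrow> k < n \<Longrightarrow> M $$ (n,k) = 0" for M k
    by (simp add: A_ring_def)
  show "J_ideal n \<subseteq> ?R"
    by (auto simp: A_ring_def J_ideal_def subfield_of_order_zero)
  show "corner_unit n \<in> ?R"
    by (auto simp: A_ring_def corner_unit_def subfield_of_order_zero subfield_of_order_one)
  show "is_subalgebra n ?R ?R"
    unfolding is_subalgebra_def
  proof (intro conjI ballI subset_refl)
    show "1\<^sub>m (n+1) \<in> ?R" "0\<^sub>m (n+1) (n+1) \<in> ?R"
      by (auto simp: A_ring_def subfield_of_order_zero subfield_of_order_one)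
    fix x y assume x: "x \<in> ?R" and y: "y \<in> ?R"
    then show "x + y \<in> ?R" "- x \<in> ?R"
      by (auto simp: A_ring_def subfield_of_order_add subfield_of_order_uminus)
    show "x * y \<in> ?R"
      using A_ring_mult_closed[OF x y] .
  qed
qed

theorem lemma3p1:
  fixes n p d1 d2 :: nat
  assumes "n \<ge> 1" and "prime p" and "d1 \<ge> 1" and "d2 \<ge> 1"
    and "card (UNIV :: 'a set) = p ^ lcm d1 d2"
  defines "R \<equiv> (A_ring n (p ^ d1) (p ^ d2) :: 'a::{field,finite} mat set)"
    and "J \<equiv> (J_ideal n :: 'a mat set)"
  shows "J \<inter> ring_center n R = {0\<^sub>m (n+1) (n+1)}
     \<and> card (semisimple_complements n R J) = card J"
proof -
  have "CHAR('a) = p"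
    using CHAR_eq_prime_of_card[OF assms(2,5)] .
  then interpret block_triangular_algebra n R
    unfolding R_def using block_triangular_algebra_A_ring by metis
  show ?thesis
    unfolding J_def using J_ideal_inter_ring_center card_semisimple_complements by simp
qed

end
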